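(* Let $N$ be a finite group, let $\chi\in\operatorname{Irr}(N)$ with $\operatorname Z(N)\subseteq\ker\chi$, and let $A$ be a subgroup of $\operatorname{Aut}(N)$ containing the group of inner automorphisms $\operatorname{Inn}(N)\cong N/\operatorname Z(N)$. Regard $\chi$ as a character of $\operatorname{Inn}(N)$ and assume it extends to its stabilizer $A_\chi$ in $A$. Then for every finite group $G$ with $N\trianglelefteq G$ such that the image of $G$ in $\operatorname{Aut}(N)$ (via conjugation) is contained in $A$, the character $\chi$ extends to its stabilizer $G_\chi$. *)

theory Defs
  imports "HOL-Algebra.Algebra" "Jordan_Normal_Form.Matrix"
begin

definition mat_trace :: "complex mat \<Rightarrow> complex" where
  "mat_trace A = (\<Sum>i<dim_row A. A $$ (i, i))"

definition is_rep :: "('a, 'b) monoid_scheme \<Rightarrow> nat \<Rightarrow> ('a \<Rightarrow> complex mat) \<Rightarrow> bool" where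
  "is_rep H n \<rho> \<longleftrightarrow>
     (\<forall>h\<in>carrier H. \<rho> h \<in> carrier_mat n n) \<and>
     \<rho> \<one>\<^bsub>H\<^esub> = 1\<^sub>m n \<and>
     (\<forall>x\<in>carrier H. \<forall>y\<in>carrier H. \<rho> (x \<otimes>\<^bsub>H\<^esub> y) = \<rho> x * \<rho> y)"

definition is_subspace :: "nat \<Rightarrow> complex vec set \<Rightarrow> bool" where
  "is_subspace n W \<longleftrightarrow> W \<subseteq> carrier_vec n \<and> 0\<^sub>v n \<in> W \<and>
     (\<forall>v\<in>W. \<forall>w\<in>W. v + w \<in> W) \<and> (\<forall>c. \<forall>v\<in>W. c \<cdot>\<^sub>v v \<in> W)"

definition is_irred_rep :: "('a, 'b) monoid_scheme \<Rightarrow> nat \<Rightarrow> ('a \<Rightarrow> complex mat) \<Rightarrow> bool" where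
  "is_irred_rep H n \<rho> \<longleftrightarrow> is_rep H n \<rho> \<and> n > 0 \<and>
     (\<forall>W. is_subspace n W \<and> (\<forall>h\<in>carrier H. \<forall>w\<in>W. \<rho> h *\<^sub>v w \<in> W)
          \<longrightarrow> W = {0\<^sub>v n} \<or> W = carrier_vec n)"

text \<open>Characters are compared on the carrier only.\<close>
definition is_character :: "('a, 'b) monoid_scheme \<Rightarrow> ('a \<Rightarrow> complex) \<Rightarrow> bool" where
  "is_character H \<chi> \<longleftrightarrow> (\<exists>n \<rho>. is_rep H n \<rho> \<and> (\<forall>h\<in>carrier H. \<chi> h = mat_trace (\<rho> h)))"

definition is_irr_character :: "('a, 'b) monoid_scheme \<Rightarrow> ('a \<Rightarrow> complex) \<Rightarrow> bool" where
  "is_irr_character H \<chi> \<longleftrightarrow> (\<exists>n \<rho>. is_irred_rep H n \<rho> \<and> (\<forall>h\<in>carrier H. \<chi> h = mat_trace (\<rho> h)))"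

definition group_center :: "('a, 'b) monoid_scheme \<Rightarrow> 'a set" where
  "group_center G = {z \<in> carrier G. \<forall>g\<in>carrier G. z \<otimes>\<^bsub>G\<^esub> g = g \<otimes>\<^bsub>G\<^esub> z}"

definition char_kernel :: "('a, 'b) monoid_scheme \<Rightarrow> ('a \<Rightarrow> complex) \<Rightarrow> 'a set" where
  "char_kernel G \<chi> = {g \<in> carrier G. \<chi> g = \<chi> \<one>\<^bsub>G\<^esub>}"

text \<open>Inner automorphism of N induced by a (as an element of AutoGroup N, i.e. extensional).\<close>
definition inner_aut :: "('a, 'b) monoid_scheme \<Rightarrow> 'a \<Rightarrow> ('a \<Rightarrow> 'a)" where
  "inner_aut N a = (\<lambda>x\<in>carrier N. a \<otimes>\<^bsub>N\<^esub> x \<otimes>\<^bsub>N\<^esub> inv\<^bsub>N\<^esub> a)"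

definition Inn :: "('a, 'b) monoid_scheme \<Rightarrow> ('a \<Rightarrow> 'a) set" where
  "Inn N = inner_aut N ` carrier N"

definition conj_on :: "('a, 'b) monoid_scheme \<Rightarrow> 'a set \<Rightarrow> 'a \<Rightarrow> ('a \<Rightarrow> 'a)" where
  "conj_on G N g = (\<lambda>x\<in>N. g \<otimes>\<^bsub>G\<^esub> x \<otimes>\<^bsub>G\<^esub> inv\<^bsub>G\<^esub> g)"

definition char_stab :: "'g set \<Rightarrow> ('g \<Rightarrow> 'a \<Rightarrow> 'a) \<Rightarrow> 'a set \<Rightarrow> ('a \<Rightarrow> complex) \<Rightarrow> 'g set" where
  "char_stab S act N \<chi> = {g \<in> S. \<forall>x\<in>N. \<chi> (act g x) = \<chi> x}"

end

theory Submission
  imports Defs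
begin

text \<open>Conjugation maps \<open>G\<^sub>\<chi>\<close> homomorphically into \<open>A\<^sub>\<chi>\<close> and restricts to the inner
  automorphisms on \<open>N\<close>. Pulling back a representation of \<open>A\<^sub>\<chi>\<close> whose character extends
  \<open>\<chi>\<close> along this homomorphism gives a character of \<open>G\<^sub>\<chi>\<close> extending \<open>\<chi>\<close>.
  Irreducibility and \<open>Z(N) \<subseteq> ker \<chi>\<close> are only needed to view \<open>\<chi>\<close> as a character of
  \<open>Inn(N)\<close>; the hypothesis on \<open>\<psi>\<close> already presupposes that, so the proof does not use them.\<close>

lemma is_rep_pullback:
  assumes rep: "is_rep K n \<rho>" and f: "f \<in> hom H K" and f_one: "f \<one>\<^bsub>H\<^esub> = \<one>\<^bsub>K\<^esub>"
  shows "is_rep H n (\<rho> \<circ> f)"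
proof -
  have f_closed: "\<And>x. x \<in> carrier H \<Longrightarrow> f x \<in> carrier K"
    and f_mult: "\<And>x y. x \<in> carrier H \<Longrightarrow> y \<in> carrier H \<Longrightarrow> f (x \<otimes>\<^bsub>H\<^esub> y) = f x \<otimes>\<^bsub>K\<^esub> f y"
    using f by (auto simp: hom_def)
  show ?thesis
    using rep f_one unfolding is_rep_def by (simp add: f_closed f_mult)
qed

lemma is_character_pullback:
  assumes "is_character K \<psi>" and "f \<in> hom H K" and "f \<one>\<^bsub>H\<^esub> = \<one>\<^bsub>K\<^esub>"
  shows "is_character H (\<psi> \<circ> f)"
proof -
  obtain n \<rho> where rep: "is_rep K n \<rho>" and tr: "\<forall>k\<in>carrier K. \<psi> k = mat_trace (\<rho> k)"
    using assms(1) unfolding is_character_def by blast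
  have "\<forall>h\<in>carrier H. (\<psi> \<circ> f) h = mat_trace ((\<rho> \<circ> f) h)"
    using tr assms(2) by (auto simp: hom_def)
  with is_rep_pullback[OF rep assms(2,3)] show ?thesis
    unfolding is_character_def by blast
qed

lemma AutoGroup_one: "\<one>\<^bsub>AutoGroup M\<^esub> = (\<lambda>x\<in>carrier M. x)"
  by (simp add: AutoGroup_def BijGroup_def)

lemma AutoGroup_mult:
  "\<alpha> \<in> Bij (carrier M) \<Longrightarrow> \<beta> \<in> Bij (carrier M) \<Longrightarrow> \<alpha> \<otimes>\<^bsub>AutoGroup M\<^esub> \<beta> = compose (carrier M) \<alpha> \<beta>"
  by (simp add: AutoGroup_def BijGroup_def)

lemma (in group) conj_on_one: "N \<subseteq> carrier G \<Longrightarrow> conj_on G N \<one> = (\<lambda>x\<in>N. x)"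
  unfolding conj_on_def by (rule restrict_ext) auto

lemma (in group) conj_on_mult:
  assumes "N \<lhd> G" and x: "x \<in> carrier G" and y: "y \<in> carrier G"
  shows "conj_on G N (x \<otimes> y) = compose N (conj_on G N x) (conj_on G N y)"
  unfolding compose_def conj_on_def
proof (rule restrict_ext)
  fix z assume z: "z \<in> N"
  have "z \<in> carrier G"
    using z normal_imp_subgroup[OF assms(1)] subgroup.subset by blast
  moreover have "y \<otimes> z \<otimes> inv y \<in> N"
    using normal.inv_op_closed2[OF assms(1) y z] .
  ultimately show "x \<otimes> y \<otimes> z \<otimes> inv (x \<otimes> y)
                   = (\<lambda>w\<in>N. x \<otimes> w \<otimes> inv x) ((\<lambda>w\<in>N. y \<otimes> w \<otimes> inv y) z)"
    using x y z by (simp add: inv_mult_group m_assoc)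
qed

lemma (in group) inner_aut_eq_conj_on:
  assumes "subgroup H G" and "x \<in> H"
  shows "inner_aut (G\<lparr>carrier := H\<rparr>) x = conj_on G H x"
  using assms by (simp add: inner_aut_def conj_on_def)

lemma (in group) conj_on_hom_char_stab:
  assumes normal: "carrier M \<lhd> G" and A: "A \<subseteq> carrier (AutoGroup M)"
    and conj_in_A: "\<And>g. g \<in> carrier G \<Longrightarrow> conj_on G (carrier M) g \<in> A"
  shows "conj_on G (carrier M)
           \<in> hom (G\<lparr>carrier := char_stab (carrier G) (conj_on G (carrier M)) (carrier M) \<chi>\<rparr>)
                 ((AutoGroup M)\<lparr>carrier := char_stab A (\<lambda>\<alpha>. \<alpha>) (carrier M) \<chi>\<rparr>)"
proof -
  have Bij: "\<And>g. g \<in> carrier G \<Longrightarrow> conj_on G (carrier M) g \<in> Bij (carrier M)"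
    using A conj_in_A by (auto simp: AutoGroup_def auto_def)
  have "conj_on G (carrier M) (x \<otimes> y) = conj_on G (carrier M) x \<otimes>\<^bsub>AutoGroup M\<^esub> conj_on G (carrier M) y"
    if "x \<in> carrier G" "y \<in> carrier G" for x y
    using that by (simp add: conj_on_mult[OF normal] AutoGroup_mult Bij)
  then show ?thesis
    using conj_in_A by (auto simp: hom_def char_stab_def)
qed

theorem lemma2p4:
  fixes N :: "'a monoid" and \<chi> :: "'a \<Rightarrow> complex" and A :: "('a \<Rightarrow> 'a) set"
  assumes "group N" and "finite (carrier N)"
    and "is_irr_character N \<chi>"
    and "group_center N \<subseteq> char_kernel N \<chi>"
    and "subgroup A (AutoGroup N)"
    and "Inn N \<subseteq> A"
    and "\<exists>\<psi>. is_character ((AutoGroup N)\<lparr>carrier := char_stab A (\<lambda>\<alpha>. \<alpha>) (carrier N) \<chi>\<rparr>) \<psi>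
              \<and> (\<forall>a\<in>carrier N. \<psi> (inner_aut N a) = \<chi> a)"
  shows "\<forall>G :: 'a monoid. group G \<and> finite (carrier G) \<and> carrier N \<lhd> G
           \<and> N = G\<lparr>carrier := carrier N\<rparr>
           \<and> (\<forall>g\<in>carrier G. conj_on G (carrier N) g \<in> A)
         \<longrightarrow> (\<exists>\<psi>. is_character (G\<lparr>carrier := char_stab (carrier G) (conj_on G (carrier N)) (carrier N) \<chi>\<rparr>) \<psi>
                  \<and> (\<forall>x\<in>carrier N. \<psi> x = \<chi> x))"
proof (intro allI impI)
  fix G :: "'a monoid"
  assume "group G \<and> finite (carrier G) \<and> carrier N \<lhd> G \<and> N = G\<lparr>carrier := carrier N\<rparr>
          \<and> (\<forall>g\<in>carrier G. conj_on G (carrier N) g \<in> A)"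
  then have G: "group G" and normal: "carrier N \<lhd> G" and N: "N = G\<lparr>carrier := carrier N\<rparr>"
    and conj_in_A: "\<And>g. g \<in> carrier G \<Longrightarrow> conj_on G (carrier N) g \<in> A"
    by blast+
  interpret G: group G by (rule G)
  obtain \<psi> where \<psi>: "is_character ((AutoGroup N)\<lparr>carrier := char_stab A (\<lambda>\<alpha>. \<alpha>) (carrier N) \<chi>\<rparr>) \<psi>"
    and \<psi>_inner: "\<forall>a\<in>carrier N. \<psi> (inner_aut N a) = \<chi> a"
    using assms(7) by blast
  have sub: "subgroup (carrier N) G"
    using normal by (rule normal_imp_subgroup)
  have hom: "conj_on G (carrier N)
      \<in> hom (G\<lparr>carrier := char_stab (carrier G) (conj_on G (carrier N)) (carrier N) \<chi>\<rparr>)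
            ((AutoGroup N)\<lparr>carrier := char_stab A (\<lambda>\<alpha>. \<alpha>) (carrier N) \<chi>\<rparr>)"
    using G.conj_on_hom_char_stab[OF normal subgroup.subset[OF assms(5)] conj_in_A] .
  have one: "conj_on G (carrier N) \<one>\<^bsub>G\<^esub> = \<one>\<^bsub>AutoGroup N\<^esub>"
    using G.conj_on_one subgroup.subset[OF sub] by (simp add: AutoGroup_one)
  have "conj_on G (carrier N) x = inner_aut N x" if "x \<in> carrier N" for x
    using G.inner_aut_eq_conj_on[OF sub that] N by simp
  then have "\<forall>x\<in>carrier N. (\<psi> \<circ> conj_on G (carrier N)) x = \<chi> x"
    using \<psi>_inner by simp
  with is_character_pullback[OF \<psi> hom] one show "\<exists>\<psi>. is_character
      (G\<lparr>carrier := char_stab (carrier G) (conj_on G (carrier N)) (carrier N) \<chi>\<rparr>) \<psi>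
      \<and> (\<forall>x\<in>carrier N. \<psi> x = \<chi> x)"
    by auto
qed

end
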